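(* Let $X_t=(1+\sin(\pi t))\max(Z_t,1/2)$, $t\in[0,1]$, and $F(\lambda)=\inf_{\sigma\in\mathcal T}\mathbb E_{\mathbb P}[X_\sigma\min(1,\lambda Z_\sigma)]$ for $\lambda>0$. Then (i) $F(\lambda)=1$ for all $\lambda\ge2$; (ii) the left derivative of $F$ at $2$ satisfies $F'_-(2)\ge\nu$, where $\nu=\frac12\mathbb E_{\mathbb P}[Z_1\mathbb I_{Z_1<1/2}]$.
   Context: Black–Scholes setup with horizon $1$: standard Brownian motion $W$ on a complete probability space $(\Omega,\mathcal F,\mathbb P)$, filtration $\mathcal F_t=\sigma\{W_s:s\le t\}$ completed by null sets; $Z_t=\exp(-\frac{\vartheta}{\kappa}W_t-\frac{\vartheta^2}{2\kappa^2}t)$ with constants $\kappa>0$, $\vartheta\in\mathbb R$. In $\sin(\pi t)$, $\pi=3.14\ldots$. $\mathcal T$ is the set of stopping times with values in $[0,1]$. $F$ is concave on $(0,\infty)$, so $F'_-(2)$ exists. *)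

theory Defs
  imports "HOL-Probability.Probability"
begin

definition brownian_motion :: "'a measure \<Rightarrow> (real \<Rightarrow> 'a \<Rightarrow> real) \<Rightarrow> bool" where
  "brownian_motion M W \<longleftrightarrow>
     prob_space M \<and>
     (\<forall>t. W t \<in> borel_measurable M) \<and>
     (AE \<omega> in M. W 0 \<omega> = 0 \<and> continuous_on {0..} (\<lambda>t. W t \<omega>)) \<and>
     (\<forall>s t. 0 \<le> s \<and> s < t \<longrightarrow>
        distributed M lborel (\<lambda>\<omega>. W t \<omega> - W s \<omega>)
          (\<lambda>x. ennreal (normal_density 0 (sqrt (t - s)) x))) \<and>
     (\<forall>(n::nat) (ts::nat \<Rightarrow> real). 0 \<le> ts 0 \<and> (\<forall>i<n. ts i < ts (Suc i)) \<longrightarrow>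
        prob_space.indep_vars M (\<lambda>_. borel) (\<lambda>i \<omega>. W (ts (Suc i)) \<omega> - W (ts i) \<omega>) {..<n})"

definition bm_filtration :: "'a measure \<Rightarrow> (real \<Rightarrow> 'a \<Rightarrow> real) \<Rightarrow> real \<Rightarrow> 'a measure" where
  "bm_filtration M W t =
     sigma (space M)
       ((\<Union>s\<in>{0..t}. {W s -` B \<inter> space M | B. B \<in> sets borel}) \<union> null_sets M)"

definition stopping_times01 :: "'a measure \<Rightarrow> (real \<Rightarrow> 'a \<Rightarrow> real) \<Rightarrow> ('a \<Rightarrow> real) set" where
  "stopping_times01 M W =
     {T. stopping_time (bm_filtration M W) T \<and> (\<forall>\<omega>\<in>space M. T \<omega> \<in> {0..1})}"

end

theory Submission
  imports Defs
begin

(*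
  For l \<ge> 2 the payoff X\<^sub>\<sigma> min(1, l Z\<^sub>\<sigma>) dominates Z\<^sub>\<sigma> pointwise, and E Z\<^sub>\<sigma> \<ge> 1 for every
  stopping time \<sigma> by optional stopping for the exponential martingale Z: first for the dyadic
  upper approximations of \<sigma>, where it reduces to the martingale property on a finite grid,
  then in the limit, where truncations of Z\<^sub>\<sigma> are controlled by a second moment bound.
  The time \<sigma> = 0 attains the value 1, so F = 1 on [2, \<infinity>).

  Being an infimum of functions concave in l, F is concave, so its difference quotients at 2
  decrease towards the left derivative. The time \<sigma> = 1 gives F(l) \<le> 1 - (2 - l) \<nu> for l \<le> 2,
  which bounds all these quotients from below by \<nu>.
*)

section \<open>Concave functions and one-sided slopes\<close>

lemma concave_on_INF:
  fixes g :: "'i \<Rightarrow> 'a::real_vector \<Rightarrow> real"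
  assumes "I \<noteq> {}" and concave: "\<And>i. i \<in> I \<Longrightarrow> concave_on S (g i)"
    and bdd: "\<And>x. x \<in> S \<Longrightarrow> bdd_below ((\<lambda>i. g i x) ` I)"
  shows "concave_on S (\<lambda>x. INF i\<in>I. g i x)"
  unfolding concave_on_iff
proof (intro conjI ballI allI impI)
  show "convex S" using assms(1) concave concave_on_imp_convex by blast
  fix x y and u v :: real
  assume xy: "x \<in> S" "y \<in> S" and uv: "0 \<le> u" "0 \<le> v" "u + v = 1"
  show "u * (INF i\<in>I. g i x) + v * (INF i\<in>I. g i y) \<le> (INF i\<in>I. g i (u *\<^sub>R x + v *\<^sub>R y))"
  proof (rule cINF_greatest[OF assms(1)])
    fix i assume i: "i \<in> I"
    have "u * (INF i\<in>I. g i x) + v * (INF i\<in>I. g i y) \<le> u * g i x + v * g i y"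
      using uv i cINF_lower[OF bdd[OF xy(1)]] cINF_lower[OF bdd[OF xy(2)]]
      by (intro add_mono mult_left_mono) auto
    also have "\<dots> \<le> g i (u *\<^sub>R x + v *\<^sub>R y)"
      using concave[OF i] xy uv by (auto simp: concave_on_iff)
    finally show "u * (INF i\<in>I. g i x) + v * (INF i\<in>I. g i y) \<le> g i (u *\<^sub>R x + v *\<^sub>R y)" .
  qed
qed

lemma antimono_tendsto_at_left_INF:
  fixes q :: "real \<Rightarrow> real"
  assumes "a < b"
    and antimono: "\<And>x y. a < x \<Longrightarrow> x \<le> y \<Longrightarrow> y < b \<Longrightarrow> q y \<le> q x"
    and bdd: "bdd_below (q ` {a<..<b})"
  shows "(q \<longlongrightarrow> (INF x\<in>{a<..<b}. q x)) (at_left b)"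
proof (rule order_tendstoI)
  fix e assume e: "e < (INF x\<in>{a<..<b}. q x)"
  have "\<forall>\<^sub>F x in at_left b. x \<in> {a<..<b}"
    using \<open>a < b\<close> by (rule eventually_at_left_real)
  then show "\<forall>\<^sub>F x in at_left b. e < q x"
  proof (rule eventually_mono)
    fix x assume "x \<in> {a<..<b}"
    then have "(INF x\<in>{a<..<b}. q x) \<le> q x" by (rule cINF_lower[OF bdd])
    then show "e < q x" using e by simp
  qed
next
  fix e assume "(INF x\<in>{a<..<b}. q x) < e"
  then obtain x0 where x0: "a < x0" "x0 < b" "q x0 < e"
    using cINF_less_iff[OF _ bdd] \<open>a < b\<close> by auto
  have "\<forall>\<^sub>F x in at_left b. x \<in> {x0<..<b}"
    using x0 by (intro eventually_at_left_real) auto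
  then show "\<forall>\<^sub>F x in at_left b. q x < e"
  proof (rule eventually_mono)
    fix x assume "x \<in> {x0<..<b}"
    then have "q x \<le> q x0" using x0 by (intro antimono) auto
    then show "q x < e" using x0 by simp
  qed
qed

(* The slopes towards b decrease as x increases (convex_on_slope_le for -f), so they converge
   to their infimum. *)
lemma concave_on_left_slope_tendsto:
  fixes f :: "real \<Rightarrow> real"
  assumes concave: "concave_on {a..b} f" and "a < b"
    and slope_ge: "\<And>x. a < x \<Longrightarrow> x < b \<Longrightarrow> c \<le> (f x - f b) / (x - b)"
  shows "\<exists>d. ((\<lambda>x. (f x - f b) / (x - b)) \<longlongrightarrow> d) (at_left b) \<and> c \<le> d"
proof (intro exI conjI)
  let ?q = "\<lambda>x. (f x - f b) / (x - b)"
  have bdd: "bdd_below (?q ` {a<..<b})"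
    using slope_ge by (intro bdd_belowI[of _ c]) auto
  have "?q y \<le> ?q x" if "a < x" "x \<le> y" "y < b" for x y
  proof (cases "x = y")
    case False
    have "convex_on {a..b} (\<lambda>x. - f x)" using concave by (simp add: concave_on_def)
    from convex_on_slope_le(2)[OF this, of x b y] that False
    have "(- f x - - f b) / (x - b) \<le> (- f y - - f b) / (y - b)" by simp
    moreover have "(- f z - - f b) / (z - b) = - ?q z" for z
      by (simp add: minus_divide_left)
    ultimately show ?thesis by simp
  qed simp
  then show "(?q \<longlongrightarrow> (INF x\<in>{a<..<b}. ?q x)) (at_left b)"
    using antimono_tendsto_at_left_INF[OF \<open>a < b\<close> _ bdd] by blast
  show "c \<le> (INF x\<in>{a<..<b}. ?q x)"
    using \<open>a < b\<close> slope_ge by (intro cINF_greatest) auto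
qed

lemma concave_on_cong:
  assumes "\<And>x. x \<in> S \<Longrightarrow> f x = g x"
  shows "concave_on S f \<longleftrightarrow> concave_on S g"
  using assms unfolding concave_on_iff convex_alt
  by (smt (verit, best) scaleR_collapse)

lemma concave_on_min_one_mult:
  fixes z :: real
  assumes "0 \<le> z" "convex S"
  shows "concave_on S (\<lambda>l. min 1 (l * z))"
  unfolding concave_on_iff
proof (intro conjI ballI allI impI \<open>convex S\<close>)
  fix x y u v :: real assume "0 \<le> u" "0 \<le> v" "u + v = 1"
  then have "u * min 1 (x * z) + v * min 1 (y * z) \<le> u * 1 + v * 1"
    and "u * min 1 (x * z) + v * min 1 (y * z) \<le> u * (x * z) + v * (y * z)"
    using \<open>0 \<le> z\<close> by (intro add_mono mult_left_mono; simp)+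
  then show "u * min 1 (x * z) + v * min 1 (y * z) \<le> min 1 ((u *\<^sub>R x + v *\<^sub>R y) * z)"
    using \<open>u + v = 1\<close> by (simp add: algebra_simps)
qed

lemma sin_pi_unit_bounds:
  assumes "0 \<le> t" "t \<le> 1"
  shows "0 \<le> sin (pi * t)" "sin (pi * t) \<le> 1"
  using assms by (simp_all add: sin_ge_zero mult_left_le)

lemma payoff_integrand_ge:
  fixes s z l :: real
  assumes "0 \<le> s" "0 < z" "2 \<le> l"
  shows "z \<le> (1 + s) * max z (1/2) * min 1 (l * z)"
proof (cases "z \<ge> 1/2")
  case True
  have "2 * (1/2) \<le> l * z" using assms True by (intro mult_mono) auto
  then have "1 \<le> l * z" by simp
  then show ?thesis using True assms by (simp add: mult_left_mono)
next
  case False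
  have "2 * z \<le> l * z" using assms by (intro mult_right_mono) auto
  then have "z \<le> 1/2 * min 1 (l * z)" using False by simp
  also have "\<dots> \<le> (1 + s) * (1/2 * min 1 (l * z))" using assms by (simp add: mult_left_mono)
  finally show ?thesis using False by (simp add: mult.assoc)
qed

lemma payoff_integrand_bounds:
  fixes s z l :: real
  assumes "0 \<le> s" "s \<le> 1" "0 \<le> z" "0 < l"
  shows "0 \<le> (1 + s) * max z (1/2) * min 1 (l * z)" "(1 + s) * max z (1/2) * min 1 (l * z) \<le> 2 * z + 2"
proof -
  have min: "0 \<le> min 1 (l * z)" "min 1 (l * z) \<le> 1"
    and max: "0 \<le> max z (1/2)" "max z (1/2) \<le> z + 1"
    using assms by auto
  show "0 \<le> (1 + s) * max z (1/2) * min 1 (l * z)"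
    using assms min max by simp
  have "(1 + s) * max z (1/2) \<le> 2 * (z + 1)"
    using assms max by (intro mult_mono) auto
  then have "(1 + s) * max z (1/2) * min 1 (l * z) \<le> 2 * (z + 1) * 1"
    using assms min max by (intro mult_mono) auto
  then show "(1 + s) * max z (1/2) * min 1 (l * z) \<le> 2 * z + 2" by simp
qed

lemma payoff_integrand_at_one_le:
  fixes x z :: real
  assumes "0 < x" "x \<le> 2" "0 < z"
  shows "max z (1/2) * min 1 (x * z) \<le> z - (2 - x) / 2 * (z * indicator {..<1/2} z)"
proof (cases "z < 1/2")
  case True
  have "x * z \<le> 2 * z" using assms by (intro mult_right_mono) auto
  then have "x * z < 1" using True by linarith
  then show ?thesis using True by (simp add: field_simps)
next
  case False
  then have "max z (1/2) * min 1 (x * z) \<le> z * 1" using assms by (intro mult_mono) auto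
  then show ?thesis using False by simp
qed

definition dyadic_ceiling :: "nat \<Rightarrow> real \<Rightarrow> real" where
  "dyadic_ceiling n x = real (nat \<lceil>2^n * x\<rceil>) / 2^n"

lemma dyadic_ceiling_bounds:
  assumes "0 \<le> x" "x \<le> 1"
  shows "x \<le> dyadic_ceiling n x" "dyadic_ceiling n x \<le> x + 1 / 2^n"
    and "0 \<le> dyadic_ceiling n x" "dyadic_ceiling n x \<le> 1"
proof -
  have ceil: "2^n * x \<le> of_int \<lceil>2^n * x\<rceil>" "of_int \<lceil>2^n * x\<rceil> < 2^n * x + 1"
    using ceiling_correct[of "2^n * x"] by linarith+
  have "0 \<le> (2::real)^n * x" using assms by simp
  then have "0 \<le> \<lceil>2^n * x\<rceil>" by simp
  then have nat_ceil: "real (nat \<lceil>2^n * x\<rceil>) = of_int \<lceil>2^n * x\<rceil>" by simp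
  have "\<lceil>2^n * x\<rceil> \<le> 2^n"
    using assms by (simp add: ceiling_le_iff)
  then have "real_of_int \<lceil>2^n * x\<rceil> \<le> 2^n" by (simp flip: of_int_le_iff)
  then show "dyadic_ceiling n x \<le> 1"
    unfolding dyadic_ceiling_def nat_ceil by simp
  show "x \<le> dyadic_ceiling n x" "dyadic_ceiling n x \<le> x + 1 / 2^n"
    unfolding dyadic_ceiling_def nat_ceil using ceil
    by (simp_all add: le_divide_eq divide_le_eq field_simps)
  show "0 \<le> dyadic_ceiling n x" by (simp add: dyadic_ceiling_def)
qed

lemma tendsto_dyadic_ceiling:
  assumes "0 \<le> x" "x \<le> 1"
  shows "(\<lambda>n. dyadic_ceiling n x) \<longlonglongrightarrow> x"
proof (rule real_tendsto_sandwich[of "\<lambda>n. x" _ _ "\<lambda>n. x + 1 / 2^n"])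
  show "\<forall>\<^sub>F n in sequentially. x \<le> dyadic_ceiling n x"
    and "\<forall>\<^sub>F n in sequentially. dyadic_ceiling n x \<le> x + 1 / 2^n"
    using dyadic_ceiling_bounds[OF assms] by simp_all
  have "(\<lambda>n. x + 1 / (2::real)^n) \<longlonglongrightarrow> x + 0"
    by (intro tendsto_add tendsto_const LIMSEQ_divide_realpow_zero) simp_all
  then show "(\<lambda>n. x + 1 / 2^n) \<longlonglongrightarrow> x" by simp
qed simp

lemma dyadic_ceiling_telescope:
  fixes f :: "real \<Rightarrow> real"
  assumes x: "0 \<le> x" "x \<le> 1"
  shows "f (dyadic_ceiling n x)
    = f 0 + (\<Sum>k<2^n. of_bool (real k / 2^n < x) * (f (real (Suc k) / 2^n) - f (real k / 2^n)))"
proof -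
  define j where "j = nat \<lceil>2^n * x\<rceil>"
  have "\<lceil>2^n * x\<rceil> \<le> 2^n" using x by (simp add: ceiling_le_iff)
  then have "j \<le> 2^n" unfolding j_def by (simp add: nat_le_iff)
  have below: "real k / 2^n < x \<longleftrightarrow> k < j" for k
  proof -
    have "real k / 2^n < x \<longleftrightarrow> real k < 2^n * x" by (simp add: divide_less_eq mult.commute)
    also have "\<dots> \<longleftrightarrow> int k < \<lceil>2^n * x\<rceil>" by (simp add: less_ceiling_iff)
    also have "\<dots> \<longleftrightarrow> k < j" unfolding j_def by linarith
    finally show ?thesis .
  qed
  have "(\<Sum>k<2^n. of_bool (real k / 2^n < x) * (f (real (Suc k) / 2^n) - f (real k / 2^n)))
      = (\<Sum>k\<in>{..<2^n} \<inter> {..<j}. f (real (Suc k) / 2^n) - f (real k / 2^n))"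
    by (simp add: below sum.inter_restrict[symmetric] del: of_nat_Suc) (simp add: lessThan_def)
  also have "{..<2^n} \<inter> {..<j} = {..<j}" using \<open>j \<le> 2^n\<close> by auto
  also have "(\<Sum>k<j. f (real (Suc k) / 2^n) - f (real k / 2^n)) = f (real j / 2^n) - f 0"
    using sum_lessThan_telescope[where f="\<lambda>k. f (real k / 2^n)"] by simp
  finally show ?thesis by (simp add: dyadic_ceiling_def j_def)
qed

lemma sets_PiM_partial_sums:
  fixes B :: "'j \<Rightarrow> real set" and k :: "'j \<Rightarrow> nat"
  assumes "finite J" "\<And>j. j \<in> J \<Longrightarrow> k j \<le> m" "\<And>j. B j \<in> sets borel"
  shows "{x \<in> space (\<Pi>\<^sub>M i\<in>{..<m}. borel). \<forall>j\<in>J. (\<Sum>i<k j. x i) \<in> B j} \<in> sets (\<Pi>\<^sub>M i\<in>{..<m}. borel)"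
proof -
  have "(\<lambda>x. \<Sum>i<k j. x i) \<in> borel_measurable (\<Pi>\<^sub>M i\<in>{..<m}. (borel :: real measure))" if "j \<in> J" for j
    by (intro borel_measurable_sum[where f="\<lambda>i x. x i"] measurable_component_singleton)
       (use assms(2)[OF that] in auto)
  then have "Measurable.pred (\<Pi>\<^sub>M i\<in>{..<m}. borel) (\<lambda>x. \<forall>j\<in>J. (\<Sum>i<k j. x i) \<in> B j)"
    using assms(1) by (intro pred_intros_finite pred_sets2[OF assms(3)]) auto
  then show ?thesis by (simp add: pred_def)
qed

lemma normal_density_exp_tilt:
  assumes "s > 0"
  shows "normal_density 0 s x * exp (b * x - b\<^sup>2 * s\<^sup>2 / 2) = normal_density (b * s\<^sup>2) s x"
proof -
  have "- (x\<^sup>2) / (2 * s\<^sup>2) + (b * x - b\<^sup>2 * s\<^sup>2 / 2) = - (x - b * s\<^sup>2)\<^sup>2 / (2 * s\<^sup>2)"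
    using assms by (simp add: field_simps power2_eq_square)
  then show ?thesis
    unfolding normal_density_def by (simp add: exp_add[symmetric])
qed

lemma finite_grid_through:
  fixes J :: "real set"
  assumes J: "finite J" "J \<subseteq> {0..t}" and "0 \<le> t" "0 < h"
  obtains ts m where "ts 0 = 0" "ts m = t" "ts (Suc m) = t + h" "\<And>i. ts i < ts (Suc i)"
    "\<And>j. j \<in> J \<Longrightarrow> \<exists>k\<le>m. ts k = j"
proof -
  define L where "L = sorted_list_of_set (insert 0 (insert t J))"
  have setL: "set L = insert 0 (insert t J)"
    unfolding L_def by (rule set_sorted_list_of_set) (use J in simp)
  have strict: "sorted_wrt (<) L"
    unfolding L_def by (rule sorted_list_of_set.strict_sorted_key_list_of_set)
  define n where "n = length L"
  have L_bounds: "i < n \<Longrightarrow> 0 \<le> L ! i \<and> L ! i \<le> t" for i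
    using J \<open>0 \<le> t\<close> nth_mem[of i L] setL by (auto simp: n_def)
  obtain m where n: "n = Suc m" using setL n_def by (cases L) auto
  define ts where "ts i = (if i < n then L ! i else t + h + real (i - n))" for i
  have index_of: "\<exists>k<n. ts k = x" if "x \<in> set L" for x
    using that by (auto simp: in_set_conv_nth ts_def n_def)
  have le_ts: "ts k \<le> ts k'" if "k \<le> k'" "k' < n" for k k'
    using sorted_wrt_nth_less[OF strict, of k k'] that by (cases "k = k'") (auto simp: ts_def n_def)
  show thesis
  proof
    obtain k where "k < n" "ts k = 0" using index_of setL by auto
    then show "ts 0 = 0" using le_ts[of 0 k] L_bounds[of 0] n by (simp add: ts_def)
    obtain k where "k < n" "ts k = t" using index_of setL by auto
    then show "ts m = t" using le_ts[of k m] L_bounds[of m] n by (simp add: ts_def)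
    then show "ts (Suc m) = t + h" using n by (simp add: ts_def)
    show "ts i < ts (Suc i)" for i
    proof (cases "Suc i < n")
      case True
      then show ?thesis using sorted_wrt_nth_less[OF strict, of i "Suc i"] by (simp add: ts_def n_def)
    next
      case False
      then consider "i = m" | "\<not> i < n" using n by linarith
      then show ?thesis
        using \<open>ts m = t\<close> \<open>0 < h\<close> n by cases (auto simp: ts_def)
    qed
    show "\<exists>k\<le>m. ts k = j" if "j \<in> J" for j
      using index_of[of j] that setL n by (auto simp: less_Suc_eq_le)
  qed
qed

lemma min_le_square_div:
  fixes y K :: real
  assumes "0 \<le> y" "0 < K"
  shows "y - min y K \<le> y\<^sup>2 / K"
proof (cases "y \<le> K")
  case False
  then have "K * (y - K) \<le> y * (y - K)" "y * (y - K) \<le> y * y"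
    using assms by (simp_all add: mult_right_mono mult_left_mono)
  then have "K * (y - K) \<le> y * y" by linarith
  then show ?thesis using False assms by (simp add: field_simps power2_eq_square)
qed (use assms in simp)

lemma (in finite_measure) integrable_of_bounded_truncations:
  fixes f :: "'a \<Rightarrow> real"
  assumes f: "f \<in> borel_measurable M" "\<And>x. x \<in> space M \<Longrightarrow> 0 \<le> f x"
    and bounded: "\<And>K. 0 < K \<Longrightarrow> (\<integral>x. min (f x) K \<partial>M) \<le> B"
  shows "integrable M f" "(\<lambda>k. \<integral>x. min (f x) (real (Suc k)) \<partial>M) \<longlonglongrightarrow> integral\<^sup>L M f"
proof -
  define g where "g k x = min (f x) (real (Suc k))" for k x
  have int_g: "integrable M (g k)" for k
  proof (rule Bochner_Integration.integrable_bound)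
    show "integrable M (\<lambda>_. real (Suc k))" by simp
    show "g k \<in> borel_measurable M" unfolding g_def using f(1) by measurable
    show "AE x in M. norm (g k x) \<le> norm (real (Suc k))"
      using f(2) by (intro AE_I2) (simp add: g_def)
  qed
  have "incseq (\<lambda>k. integral\<^sup>L M (g k))"
    by (intro incseq_SucI integral_mono[OF int_g int_g]) (simp add: g_def)
  moreover have "bdd_above (range (\<lambda>k. integral\<^sup>L M (g k)))"
    unfolding g_def by (intro bdd_aboveI2[where M=B] bounded) simp
  ultimately have lim: "(\<lambda>k. integral\<^sup>L M (g k)) \<longlonglongrightarrow> (SUP k. integral\<^sup>L M (g k))"
    by (intro LIMSEQ_incseq_SUP)
  have "AE x in M. (\<lambda>k. g k x) \<longlonglongrightarrow> f x"
  proof (rule AE_I2)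
    fix x
    obtain N :: nat where "f x \<le> real N" using real_arch_simple by blast
    then have "\<forall>\<^sub>F k in sequentially. g k x = f x"
      unfolding eventually_sequentially by (intro exI[of _ N]) (simp add: g_def)
    then show "(\<lambda>k. g k x) \<longlonglongrightarrow> f x" by (rule tendsto_eventually)
  qed
  moreover have "AE x in M. mono (\<lambda>k. g k x)"
    by (intro AE_I2 monoI) (simp add: g_def)
  moreover have "AE x in M. 0 \<le> g k x" for k
    using f(2) by (intro AE_I2) (simp add: g_def)
  ultimately have "integrable M f \<and> integral\<^sup>L M f = (SUP k. integral\<^sup>L M (g k))"
    using integral_monotone_convergence_nonneg[OF int_g _ _ _ lim f(1)] by blast
  then show "integrable M f" "(\<lambda>k. \<integral>x. min (f x) (real (Suc k)) \<partial>M) \<longlonglongrightarrow> integral\<^sup>L M f"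
    using lim by (simp_all add: g_def[abs_def])
qed

lemma (in prob_space) Int_stable_Un_null_sets:
  assumes "Int_stable A" "A \<subseteq> events"
  shows "Int_stable (A \<union> null_sets M)"
proof (rule Int_stableI)
  fix a b assume ab: "a \<in> A \<union> null_sets M" "b \<in> A \<union> null_sets M"
  show "a \<inter> b \<in> A \<union> null_sets M"
  proof (cases "a \<in> null_sets M \<or> b \<in> null_sets M")
    case True
    moreover have "a \<in> events" "b \<in> events" using ab assms(2) by auto
    ultimately have "a \<inter> b \<in> null_sets M" by (metis null_set_Int1 null_set_Int2)
    then show ?thesis by simp
  next
    case False
    then have "a \<in> A" "b \<in> A" using ab by auto
    then show ?thesis using assms(1) by (simp add: Int_stable_def)
  qed
qed

lemma (in prob_space) indep_set_Un_null_sets: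
  assumes "indep_set A B"
  shows "indep_set (A \<union> null_sets M) B"
  unfolding indep_sets2_eq
proof (intro conjI ballI)
  show "A \<union> null_sets M \<subseteq> events" "B \<subseteq> events"
    using assms by (auto simp: indep_sets2_eq)
  fix a b assume a: "a \<in> A \<union> null_sets M" and b: "b \<in> B"
  show "prob (a \<inter> b) = prob a * prob b"
  proof (cases "a \<in> null_sets M")
    case True
    moreover have "b \<in> events" using b assms by (auto simp: indep_sets2_eq)
    ultimately have "a \<inter> b \<in> null_sets M" by (rule null_set_Int2)
    then show ?thesis using True by (simp add: measure_def null_setsD1)
  next
    case False
    then show ?thesis using a b assms by (auto simp: indep_sets2_eq)
  qed
qed

lemma (in complete_measure) borel_measurable_AE_eq:
  fixes f g :: "'a \<Rightarrow> 'b::topological_space"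
  assumes g: "g \<in> borel_measurable M" and ae: "AE x in M. f x = g x"
  shows "f \<in> borel_measurable M"
proof (rule measurableI)
  fix A :: "'b set" assume A: "A \<in> sets borel"
  show "f -` A \<inter> space M \<in> sets M"
  proof (rule in_sets_AE)
    show "AE x in M. (x \<in> g -` A \<inter> space M) = (x \<in> f -` A \<inter> space M)"
      using ae by eventually_elim auto
    show "g -` A \<inter> space M \<in> sets M" using g A by (rule measurable_sets)
  qed auto
qed simp

section \<open>Brownian increments and the Brownian filtration\<close>

locale complete_brownian_motion =
  fixes M :: "'a measure" and W :: "real \<Rightarrow> 'a \<Rightarrow> real"
  assumes brownian: "brownian_motion M W" and complete: "complete_measure M"
begin

sublocale prob_space M
  using brownian by (simp add: brownian_motion_def)

sublocale complete_measure M
  by (rule complete)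

lemma borel_measurable_W[measurable]: "W t \<in> borel_measurable M"
  using brownian by (simp add: brownian_motion_def)

lemma AE_W_0: "AE \<omega> in M. W 0 \<omega> = 0"
  using brownian unfolding brownian_motion_def by (auto elim: AE_mp)

lemma AE_continuous_W: "AE \<omega> in M. continuous_on {0..} (\<lambda>t. W t \<omega>)"
  using brownian unfolding brownian_motion_def by (auto elim: AE_mp)

lemma distributed_W_increment:
  "0 \<le> s \<Longrightarrow> s < t \<Longrightarrow>
    distributed M lborel (\<lambda>\<omega>. W t \<omega> - W s \<omega>) (\<lambda>x. ennreal (normal_density 0 (sqrt (t - s)) x))"
  using brownian by (simp add: brownian_motion_def)

lemma indep_vars_W_increments:
  "0 \<le> ts 0 \<Longrightarrow> (\<And>i. ts i < ts (Suc i)) \<Longrightarrow>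
    indep_vars (\<lambda>_. borel) (\<lambda>i \<omega>. W (ts (Suc i)) \<omega> - W (ts i) \<omega>) {..<n}"
  using brownian by (simp add: brownian_motion_def)

lemma exp_W_increment_mean_one:
  assumes "0 \<le> s" "0 < h"
  shows "integrable M (\<lambda>\<omega>. exp (b * (W (s + h) \<omega> - W s \<omega>) - b\<^sup>2 * h / 2))"
    and "(\<integral>\<omega>. exp (b * (W (s + h) \<omega> - W s \<omega>) - b\<^sup>2 * h / 2) \<partial>M) = 1"
proof -
  have D: "distributed M lborel (\<lambda>\<omega>. W (s + h) \<omega> - W s \<omega>)
      (\<lambda>x. ennreal (normal_density 0 (sqrt h) x))"
    using distributed_W_increment[of s "s + h"] assms by simp
  have tilt: "normal_density 0 (sqrt h) x * exp (b * x - b\<^sup>2 * h / 2) = normal_density (b * h) (sqrt h) x"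
    for x using normal_density_exp_tilt[of "sqrt h" x b] assms by simp
  show "integrable M (\<lambda>\<omega>. exp (b * (W (s + h) \<omega> - W s \<omega>) - b\<^sup>2 * h / 2))"
    using distributed_integrable[OF D, of "\<lambda>x. exp (b * x - b\<^sup>2 * h / 2)"] assms
    by (simp add: tilt)
  show "(\<integral>\<omega>. exp (b * (W (s + h) \<omega> - W s \<omega>) - b\<^sup>2 * h / 2) \<partial>M) = 1"
    using distributed_integral[OF D, of "\<lambda>x. exp (b * x - b\<^sup>2 * h / 2)"] assms
    by (simp add: tilt)
qed

(* On a grid through J \<union> {0, t} the values W j - W 0, j \<in> J, are partial sums of the increments
   before t, which are independent of the increment after t. *)
lemma prob_centered_W_past_increment:
  assumes "finite J" "J \<subseteq> {0..t}" "0 \<le> t" "0 < h"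
    and B: "\<And>j. B j \<in> sets borel" and C: "C \<in> sets borel"
  shows "prob ({\<omega>\<in>space M. \<forall>j\<in>J. W j \<omega> - W 0 \<omega> \<in> B j} \<inter> ((\<lambda>\<omega>. W (t + h) \<omega> - W t \<omega>) -` C \<inter> space M))
    = prob {\<omega>\<in>space M. \<forall>j\<in>J. W j \<omega> - W 0 \<omega> \<in> B j} * prob ((\<lambda>\<omega>. W (t + h) \<omega> - W t \<omega>) -` C \<inter> space M)"
proof -
  obtain ts m where ts: "ts 0 = 0" "ts m = t" "ts (Suc m) = t + h" "\<And>i. ts i < ts (Suc i)"
    and through: "\<And>j. j \<in> J \<Longrightarrow> \<exists>k\<le>m. ts k = j"
    using finite_grid_through[OF assms(1-4)] by metis
  have "\<forall>j\<in>J. \<exists>k. k \<le> m \<and> ts k = j" using through by blast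
  then obtain k where k: "\<And>j. j \<in> J \<Longrightarrow> k j \<le> m \<and> ts (k j) = j" by metis
  define D where "D i \<omega> = W (ts (Suc i)) \<omega> - W (ts i) \<omega>" for i \<omega>
  have "indep_vars (\<lambda>_. borel) D {..<Suc m}"
    unfolding D_def using ts by (intro indep_vars_W_increments) auto
  from indep_var_restrict[OF this, of "{..<m}" "{m}"]
  have ind: "indep_var (\<Pi>\<^sub>M i\<in>{..<m}. borel) (\<lambda>\<omega>. \<lambda>i\<in>{..<m}. D i \<omega>)
      (\<Pi>\<^sub>M i\<in>{m}. borel) (\<lambda>\<omega>. \<lambda>i\<in>{m}. D i \<omega>)"
    by auto
  have telescope: "(\<Sum>i<k j. (\<lambda>i\<in>{..<m}. D i \<omega>) i) = W j \<omega> - W 0 \<omega>" if "j \<in> J" for j \<omega>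
  proof -
    have "(\<Sum>i<k j. (\<lambda>i\<in>{..<m}. D i \<omega>) i) = (\<Sum>i<k j. D i \<omega>)"
      using k[OF that] by (intro sum.cong) auto
    also have "\<dots> = W j \<omega> - W 0 \<omega>"
      using sum_lessThan_telescope[of "\<lambda>i. W (ts i) \<omega>" "k j"] k[OF that] ts(1) by (simp add: D_def)
    finally show ?thesis .
  qed
  define past where
    "past = {x \<in> space (\<Pi>\<^sub>M i\<in>{..<m}. (borel :: real measure)). \<forall>j\<in>J. (\<Sum>i<k j. x i) \<in> B j}"
  define future where "future = {x \<in> space (\<Pi>\<^sub>M i\<in>{m}. (borel :: real measure)). x m \<in> C}"
  have "past \<in> sets (\<Pi>\<^sub>M i\<in>{..<m}. borel)"
    unfolding past_def using assms(1) k B by (intro sets_PiM_partial_sums) auto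
  moreover have "future \<in> sets (\<Pi>\<^sub>M i\<in>{m}. borel)"
    unfolding future_def using C by measurable
  ultimately have "prob ((\<lambda>\<omega>. (\<lambda>i\<in>{..<m}. D i \<omega>, \<lambda>i\<in>{m}. D i \<omega>)) -` (past \<times> future) \<inter> space M)
      = prob ((\<lambda>\<omega>. \<lambda>i\<in>{..<m}. D i \<omega>) -` past \<inter> space M) * prob ((\<lambda>\<omega>. \<lambda>i\<in>{m}. D i \<omega>) -` future \<inter> space M)"
    by (rule indep_varD[OF ind])
  moreover have "(\<lambda>\<omega>. \<lambda>i\<in>{..<m}. D i \<omega>) -` past \<inter> space M = {\<omega>\<in>space M. \<forall>j\<in>J. W j \<omega> - W 0 \<omega> \<in> B j}"
    using telescope by (auto simp: past_def space_PiM)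
  moreover have "(\<lambda>\<omega>. \<lambda>i\<in>{m}. D i \<omega>) -` future \<inter> space M = (\<lambda>\<omega>. W (t + h) \<omega> - W t \<omega>) -` C \<inter> space M"
    using ts by (auto simp: future_def space_PiM D_def)
  moreover have "(\<lambda>\<omega>. (\<lambda>i\<in>{..<m}. D i \<omega>, \<lambda>i\<in>{m}. D i \<omega>)) -` (past \<times> future) \<inter> space M
      = ((\<lambda>\<omega>. \<lambda>i\<in>{..<m}. D i \<omega>) -` past \<inter> space M) \<inter> ((\<lambda>\<omega>. \<lambda>i\<in>{m}. D i \<omega>) -` future \<inter> space M)"
    by auto
  ultimately show ?thesis by simp
qed

lemma prob_W_past_increment:
  assumes "finite J" "J \<subseteq> {0..t}" "0 \<le> t" "0 < h"
    and B: "\<And>j. B j \<in> sets borel" and C: "C \<in> sets borel"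
  shows "prob ({\<omega>\<in>space M. \<forall>j\<in>J. W j \<omega> \<in> B j} \<inter> ((\<lambda>\<omega>. W (t + h) \<omega> - W t \<omega>) -` C \<inter> space M))
    = prob {\<omega>\<in>space M. \<forall>j\<in>J. W j \<omega> \<in> B j} * prob ((\<lambda>\<omega>. W (t + h) \<omega> - W t \<omega>) -` C \<inter> space M)"
proof -
  have past: "{\<omega>\<in>space M. \<forall>j\<in>J. W j \<omega> - c \<omega> \<in> B j} \<in> events"
    if "c \<in> borel_measurable M" for c
  proof -
    have "Measurable.pred M (\<lambda>\<omega>. \<forall>j\<in>J. W j \<omega> - c \<omega> \<in> B j)"
      using assms(1) that by (intro pred_intros_finite pred_sets2[OF B]) auto
    then show ?thesis by (simp add: pred_def)
  qed
  have incr: "(\<lambda>\<omega>. W (t + h) \<omega> - W t \<omega>) -` C \<inter> space M \<in> events"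
    using C by measurable
  have same: "AE \<omega> in M. (\<forall>j\<in>J. W j \<omega> - W 0 \<omega> \<in> B j) \<longleftrightarrow> (\<forall>j\<in>J. W j \<omega> - 0 \<in> B j)"
    using AE_W_0 by eventually_elim simp
  have "prob {\<omega>\<in>space M. \<forall>j\<in>J. W j \<omega> - W 0 \<omega> \<in> B j} = prob {\<omega>\<in>space M. \<forall>j\<in>J. W j \<omega> - 0 \<in> B j}"
    using same by (intro measure_eq_AE past) (auto elim!: AE_mp)
  moreover have "prob ({\<omega>\<in>space M. \<forall>j\<in>J. W j \<omega> - W 0 \<omega> \<in> B j} \<inter> ((\<lambda>\<omega>. W (t + h) \<omega> - W t \<omega>) -` C \<inter> space M))
      = prob ({\<omega>\<in>space M. \<forall>j\<in>J. W j \<omega> - 0 \<in> B j} \<inter> ((\<lambda>\<omega>. W (t + h) \<omega> - W t \<omega>) -` C \<inter> space M))"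
    using same by (intro measure_eq_AE sets.Int past incr) (auto elim!: AE_mp)
  ultimately show ?thesis
    using prob_centered_W_past_increment[OF assms] by simp
qed

abbreviation \<F> :: "real \<Rightarrow> 'a measure" where
  "\<F> \<equiv> bm_filtration M W"

lemma
  shows space_bm_filtration[simp]: "space (\<F> t) = space M"
    and sets_bm_filtration: "sets (\<F> t) = sigma_sets (space M)
      ((\<Union>s\<in>{0..t}. {W s -` B \<inter> space M | B. B \<in> sets borel}) \<union> null_sets M)"
proof -
  have "(\<Union>s\<in>{0..t}. {W s -` B \<inter> space M | B. B \<in> sets borel}) \<union> null_sets M \<subseteq> Pow (space M)"
    using sets.sets_into_space by auto
  then show "space (\<F> t) = space M"
    and "sets (\<F> t) = sigma_sets (space M) ((\<Union>s\<in>{0..t}. {W s -` B \<inter> space M | B. B \<in> sets borel}) \<union> null_sets M)"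
    by (simp_all add: bm_filtration_def sets_measure_of)
qed

lemma subalgebra_bm_filtration: "subalgebra M (\<F> t)"
  unfolding subalgebra_def sets_bm_filtration by (auto intro!: sets.sigma_sets_subset)

lemma measurable_W_bm_filtration:
  assumes "0 \<le> s" "s \<le> t"
  shows "W s \<in> borel_measurable (\<F> t)"
proof (rule measurableI)
  fix A :: "real set" assume "A \<in> sets borel"
  then have "W s -` A \<inter> space M \<in> (\<Union>s\<in>{0..t}. {W s -` B \<inter> space M | B. B \<in> sets borel}) \<union> null_sets M"
    using assms by auto
  then show "W s -` A \<inter> space (\<F> t) \<in> sets (\<F> t)"
    unfolding sets_bm_filtration by (simp add: sigma_sets.Basic)
qed simp

definition W_cylinders :: "real \<Rightarrow> 'a set set" where
  "W_cylinders t = {{\<omega>\<in>space M. \<forall>j\<in>J. W j \<omega> \<in> B j} | J B.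
     finite J \<and> J \<subseteq> {0..t} \<and> (\<forall>j. B j \<in> sets borel)}"

lemma W_cylinders_events: "W_cylinders t \<subseteq> events"
proof
  fix a assume "a \<in> W_cylinders t"
  then obtain J B where a: "a = {\<omega>\<in>space M. \<forall>j\<in>J. W j \<omega> \<in> B j}" "finite J" "\<And>j. B j \<in> sets borel"
    unfolding W_cylinders_def by blast
  have "Measurable.pred M (\<lambda>\<omega>. \<forall>j\<in>J. W j \<omega> \<in> B j)"
    using a(2) by (intro pred_intros_finite pred_sets2[OF a(3)]) auto
  then show "a \<in> events" by (simp add: pred_def a(1))
qed

lemma Int_stable_W_cylinders: "Int_stable (W_cylinders t)"
proof (rule Int_stableI)
  fix a b assume "a \<in> W_cylinders t" "b \<in> W_cylinders t"
  then obtain J1 B1 J2 B2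
    where a: "a = {\<omega>\<in>space M. \<forall>j\<in>J1. W j \<omega> \<in> B1 j}" "finite J1" "J1 \<subseteq> {0..t}" "\<And>j. B1 j \<in> sets borel"
      and b: "b = {\<omega>\<in>space M. \<forall>j\<in>J2. W j \<omega> \<in> B2 j}" "finite J2" "J2 \<subseteq> {0..t}" "\<And>j. B2 j \<in> sets borel"
    unfolding W_cylinders_def by blast
  define B where "B j = (if j \<in> J1 then B1 j else UNIV) \<inter> (if j \<in> J2 then B2 j else UNIV)" for j
  have "a \<inter> b = {\<omega>\<in>space M. \<forall>j\<in>J1 \<union> J2. W j \<omega> \<in> B j}"
    unfolding a b B_def by auto
  moreover have "\<forall>j. B j \<in> sets borel" using a(4) b(4) by (simp add: B_def)
  ultimately show "a \<inter> b \<in> W_cylinders t"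
    unfolding W_cylinders_def using a(2,3) b(2,3) by (intro CollectI exI[of _ "J1 \<union> J2"] exI[of _ B]) auto
qed

lemma sets_bm_filtration_subset_cylinders:
  "sets (\<F> t) \<subseteq> sigma_sets (space M) (W_cylinders t \<union> null_sets M)"
  unfolding sets_bm_filtration
proof (rule sigma_sets_mono')
  have "W s -` B \<inter> space M \<in> W_cylinders t" if "s \<in> {0..t}" "B \<in> sets borel" for s B
  proof -
    have "W s -` B \<inter> space M = {\<omega>\<in>space M. \<forall>j\<in>{s}. W j \<omega> \<in> B}" by auto
    then show ?thesis
      unfolding W_cylinders_def using that by (intro CollectI exI[of _ "{s}"] exI[of _ "\<lambda>_. B"]) auto
  qed
  then show "(\<Union>s\<in>{0..t}. {W s -` B \<inter> space M | B. B \<in> sets borel}) \<union> null_sets M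
      \<subseteq> W_cylinders t \<union> null_sets M"
    by blast
qed

lemma indep_set_bm_filtration_increment:
  assumes "0 \<le> t" "0 < h"
  shows "indep_set (sets (\<F> t))
    (sigma_sets (space M) {(\<lambda>\<omega>. W (t + h) \<omega> - W t \<omega>) -` C \<inter> space M | C. C \<in> sets borel})"
proof -
  let ?incr = "{(\<lambda>\<omega>. W (t + h) \<omega> - W t \<omega>) -` C \<inter> space M | C. C \<in> sets borel}"
  have incr_events: "?incr \<subseteq> events"
  proof safe
    fix C :: "real set" assume "C \<in> sets borel"
    then show "(\<lambda>\<omega>. W (t + h) \<omega> - W t \<omega>) -` C \<inter> space M \<in> events" by measurable
  qed
  have "indep_set (W_cylinders t) ?incr"
    unfolding indep_sets2_eq
  proof (intro conjI ballI W_cylinders_events incr_events)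
    fix a b assume "a \<in> W_cylinders t" "b \<in> ?incr"
    then obtain J B C where "a = {\<omega>\<in>space M. \<forall>j\<in>J. W j \<omega> \<in> B j}" "finite J" "J \<subseteq> {0..t}"
      "\<And>j. B j \<in> sets borel" "b = (\<lambda>\<omega>. W (t + h) \<omega> - W t \<omega>) -` C \<inter> space M" "C \<in> sets borel"
      unfolding W_cylinders_def by blast
    then show "prob (a \<inter> b) = prob a * prob b"
      using prob_W_past_increment[of J t h B C] assms by simp
  qed
  moreover have "Int_stable ?incr"
  proof (rule Int_stableI)
    fix a b assume "a \<in> ?incr" "b \<in> ?incr"
    then obtain C D where "a = (\<lambda>\<omega>. W (t + h) \<omega> - W t \<omega>) -` C \<inter> space M" "C \<in> sets borel"
      "b = (\<lambda>\<omega>. W (t + h) \<omega> - W t \<omega>) -` D \<inter> space M" "D \<in> sets borel" by blast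
    then show "a \<inter> b \<in> ?incr" by (intro CollectI exI[of _ "C \<inter> D"]) auto
  qed
  ultimately have "indep_set (sigma_sets (space M) (W_cylinders t \<union> null_sets M)) (sigma_sets (space M) ?incr)"
    by (intro indep_set_sigma_sets indep_set_Un_null_sets Int_stable_Un_null_sets
        Int_stable_W_cylinders W_cylinders_events)
  then show ?thesis
    using sets_bm_filtration_subset_cylinders unfolding indep_sets2_eq by blast
qed

lemma indep_var_bm_filtration_increment:
  fixes f :: "'a \<Rightarrow> real" and g :: "real \<Rightarrow> real"
  assumes "0 \<le> t" "0 < h" and f: "f \<in> borel_measurable (\<F> t)" and g: "g \<in> borel_measurable borel"
  shows "indep_var borel f borel (\<lambda>\<omega>. g (W (t + h) \<omega> - W t \<omega>))"
  unfolding indep_var_eq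
proof (intro conjI)
  show "random_variable borel f"
    using measurable_from_subalg[OF subalgebra_bm_filtration f] .
  show "random_variable borel (\<lambda>\<omega>. g (W (t + h) \<omega> - W t \<omega>))" using g by measurable
  have "sigma_sets (space M) {f -` A \<inter> space M | A. A \<in> sets borel} \<subseteq> sets (\<F> t)"
    using sets.sigma_sets_subset[of "{f -` A \<inter> space M | A. A \<in> sets borel}" "\<F> t"] measurable_sets[OF f]
    by auto
  moreover have "sigma_sets (space M) {(\<lambda>\<omega>. g (W (t + h) \<omega> - W t \<omega>)) -` A \<inter> space M | A. A \<in> sets borel}
    \<subseteq> sigma_sets (space M) {(\<lambda>\<omega>. W (t + h) \<omega> - W t \<omega>) -` C \<inter> space M | C. C \<in> sets borel}"
  proof (intro sigma_sets_mono' subsetI)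
    fix x assume "x \<in> {(\<lambda>\<omega>. g (W (t + h) \<omega> - W t \<omega>)) -` A \<inter> space M | A. A \<in> sets borel}"
    then obtain A where "A \<in> sets borel" "x = (\<lambda>\<omega>. W (t + h) \<omega> - W t \<omega>) -` (g -` A) \<inter> space M" by auto
    moreover have "g -` A \<in> sets borel" using measurable_sets[OF g \<open>A \<in> sets borel\<close>] by simp
    ultimately show "x \<in> {(\<lambda>\<omega>. W (t + h) \<omega> - W t \<omega>) -` C \<inter> space M | C. C \<in> sets borel}" by blast
  qed
  ultimately show "indep_set (sigma_sets (space M) {f -` A \<inter> space M | A. A \<in> sets borel})
     (sigma_sets (space M) {(\<lambda>\<omega>. g (W (t + h) \<omega> - W t \<omega>)) -` A \<inter> space M | A. A \<in> sets borel})"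
    using indep_set_bm_filtration_increment[OF assms(1,2)] unfolding indep_sets2_eq by blast
qed

section \<open>Optional stopping for the exponential martingale\<close>

definition exp_mart :: "real \<Rightarrow> real \<Rightarrow> 'a \<Rightarrow> real" where
  "exp_mart b t \<omega> = exp (b * W t \<omega> - b\<^sup>2 / 2 * t)"

lemma borel_measurable_exp_mart[measurable]: "exp_mart b t \<in> borel_measurable M"
  unfolding exp_mart_def by measurable

lemma exp_mart_pos: "0 < exp_mart b t \<omega>"
  by (simp add: exp_mart_def)

lemma exp_mart_square: "(exp_mart b t \<omega>)\<^sup>2 = exp (b\<^sup>2 * t) * exp_mart (2 * b) t \<omega>"
proof -
  have "2 * (b * W t \<omega> - b\<^sup>2 / 2 * t) = b\<^sup>2 * t + (2 * b * W t \<omega> - (2 * b)\<^sup>2 / 2 * t)"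
    by (simp add: power2_eq_square algebra_simps)
  then show ?thesis
    unfolding exp_mart_def by (simp add: power2_eq_square exp_add[symmetric])
qed

lemma exp_mart_mean_one:
  assumes "0 \<le> t"
  shows "integrable M (exp_mart b t)" "integral\<^sup>L M (exp_mart b t) = 1"
proof -
  have "integrable M (exp_mart b t) \<and> integral\<^sup>L M (exp_mart b t) = 1"
  proof (cases "t = 0")
    case True
    have ae: "AE \<omega> in M. exp_mart b t \<omega> = 1"
      using AE_W_0 by eventually_elim (simp add: exp_mart_def True)
    show ?thesis
      using integrable_cong_AE[OF _ _ ae] integral_cong_AE[OF _ _ ae] by (simp add: prob_space)
  next
    case False
    have ae: "AE \<omega> in M. exp_mart b t \<omega> = exp (b * (W (0 + t) \<omega> - W 0 \<omega>) - b\<^sup>2 * t / 2)"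
      using AE_W_0 by eventually_elim (simp add: exp_mart_def)
    show ?thesis
      using exp_W_increment_mean_one[of 0 t b] False assms
        integrable_cong_AE[OF _ _ ae] integral_cong_AE[OF _ _ ae]
      by simp
  qed
  then show "integrable M (exp_mart b t)" "integral\<^sup>L M (exp_mart b t) = 1" by auto
qed

lemma exp_mart_increment_orthogonal:
  assumes t: "0 \<le> t" and h: "0 < h" and A: "A \<in> sets (\<F> t)"
  shows "integrable M (\<lambda>\<omega>. indicator A \<omega> * (exp_mart b (t + h) \<omega> - exp_mart b t \<omega>))"
    and "(\<integral>\<omega>. indicator A \<omega> * (exp_mart b (t + h) \<omega> - exp_mart b t \<omega>) \<partial>M) = 0"
proof -
  define g where "g x = exp (b * x - b\<^sup>2 * h / 2)" for x
  have "exp_mart b t \<in> borel_measurable (\<F> t)"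
    unfolding exp_mart_def using measurable_W_bm_filtration[OF t order_refl] by measurable
  then have "(\<lambda>\<omega>. indicator A \<omega> * exp_mart b t \<omega>) \<in> borel_measurable (\<F> t)"
    using A by measurable
  then have ind: "indep_var borel (\<lambda>\<omega>. indicator A \<omega> * exp_mart b t \<omega>) borel (\<lambda>\<omega>. g (W (t + h) \<omega> - W t \<omega>))"
    by (rule indep_var_bm_filtration_increment[OF t h]) (simp add: g_def)
  have "A \<in> events" using A subalgebra_bm_filtration by (auto simp: subalgebra_def)
  then have int_past: "integrable M (\<lambda>\<omega>. indicator A \<omega> * exp_mart b t \<omega>)"
    using integrable_real_mult_indicator[OF _ exp_mart_mean_one(1)[OF t]] by (simp add: mult.commute)
  have int_incr: "integrable M (\<lambda>\<omega>. g (W (t + h) \<omega> - W t \<omega>))"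
    and mean_incr: "(\<integral>\<omega>. g (W (t + h) \<omega> - W t \<omega>) \<partial>M) = 1"
    using exp_W_increment_mean_one[OF t h, of b] by (simp_all add: g_def)
  have split: "exp_mart b (t + h) \<omega> = exp_mart b t \<omega> * g (W (t + h) \<omega> - W t \<omega>)" for \<omega>
  proof -
    have "b * W (t + h) \<omega> - b\<^sup>2 / 2 * (t + h)
        = (b * W t \<omega> - b\<^sup>2 / 2 * t) + (b * (W (t + h) \<omega> - W t \<omega>) - b\<^sup>2 * h / 2)"
      by (simp add: algebra_simps)
    then show ?thesis unfolding exp_mart_def g_def by (simp add: exp_add[symmetric])
  qed
  have int_future: "integrable M (\<lambda>\<omega>. indicator A \<omega> * exp_mart b (t + h) \<omega>)"
    using indep_var_integrable[OF ind int_past int_incr] by (simp add: split mult.assoc)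
  have "(\<integral>\<omega>. indicator A \<omega> * exp_mart b (t + h) \<omega> \<partial>M) = (\<integral>\<omega>. indicator A \<omega> * exp_mart b t \<omega> \<partial>M)"
    using indep_var_lebesgue_integral[OF ind int_past int_incr] mean_incr by (simp add: split mult.assoc)
  then show "integrable M (\<lambda>\<omega>. indicator A \<omega> * (exp_mart b (t + h) \<omega> - exp_mart b t \<omega>))"
    and "(\<integral>\<omega>. indicator A \<omega> * (exp_mart b (t + h) \<omega> - exp_mart b t \<omega>) \<partial>M) = 0"
    using int_past int_future by (simp_all add: right_diff_distrib)
qed

lemma stopping_times01_const: "0 \<le> c \<Longrightarrow> c \<le> 1 \<Longrightarrow> (\<lambda>_. c) \<in> stopping_times01 M W"
  by (simp add: stopping_times01_def stopping_time_const)

lemma borel_measurable_stopping_time01: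
  assumes "\<sigma> \<in> stopping_times01 M W"
  shows "\<sigma> \<in> borel_measurable M"
  unfolding borel_measurable_iff_le
proof
  fix a
  have "{\<omega> \<in> space (\<F> a). \<sigma> \<omega> \<le> a} \<in> sets (\<F> a)"
    using assms stopping_timeD[of \<F> \<sigma> a] by (simp add: stopping_times01_def pred_def)
  then show "{\<omega> \<in> space M. \<sigma> \<omega> \<le> a} \<in> sets M"
    using subalgebra_bm_filtration by (auto simp: subalgebra_def)
qed

(* Optional stopping on the dyadic grid: telescoping along the grid, the increment after k/2^n
   is integrated over {\<sigma> > k/2^n} \<in> \<F>(k/2^n) and has mean zero there. *)
lemma exp_mart_dyadic_stopped_mean_one:
  assumes \<sigma>: "\<sigma> \<in> stopping_times01 M W"
  shows "integrable M (\<lambda>\<omega>. exp_mart b (dyadic_ceiling n (\<sigma> \<omega>)) \<omega>)"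
    and "(\<integral>\<omega>. exp_mart b (dyadic_ceiling n (\<sigma> \<omega>)) \<omega> \<partial>M) = 1"
proof -
  define A where "A k = {\<omega>\<in>space M. real k / 2^n < \<sigma> \<omega>}" for k :: nat
  have A: "A k \<in> sets (\<F> (real k / 2^n))" for k
    using assms stopping_timeD2[of \<F> \<sigma> "real k / 2^n"] by (simp add: stopping_times01_def pred_def A_def)
  define step where
    "step k \<omega> = indicator (A k) \<omega> * (exp_mart b (real (Suc k) / 2^n) \<omega> - exp_mart b (real k / 2^n) \<omega>)"
    for k \<omega>
  have "real (Suc k) / 2^n = real k / 2^n + 1 / 2^n" for k
    by (simp add: add_divide_distrib)
  then have step: "integrable M (step k)" "integral\<^sup>L M (step k) = 0" for k
    unfolding step_def using exp_mart_increment_orthogonal[OF _ _ A] by simp_all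
  have telescope: "exp_mart b (dyadic_ceiling n (\<sigma> \<omega>)) \<omega> = exp_mart b 0 \<omega> + (\<Sum>k<2^n. step k \<omega>)"
    if "\<omega> \<in> space M" for \<omega>
  proof -
    have "0 \<le> \<sigma> \<omega>" "\<sigma> \<omega> \<le> 1" using \<sigma> that by (auto simp: stopping_times01_def)
    moreover have "(\<Sum>k<2^n. step k \<omega>) = (\<Sum>k<2^n. of_bool (real k / 2^n < \<sigma> \<omega>)
        * (exp_mart b (real (Suc k) / 2^n) \<omega> - exp_mart b (real k / 2^n) \<omega>))"
      using that by (intro sum.cong refl) (simp add: step_def A_def)
    ultimately show ?thesis
      by (simp only: dyadic_ceiling_telescope[of "\<sigma> \<omega>" "\<lambda>t. exp_mart b t \<omega>" n])
  qed
  have "integrable M (\<lambda>\<omega>. exp_mart b (dyadic_ceiling n (\<sigma> \<omega>)) \<omega>)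
      \<longleftrightarrow> integrable M (\<lambda>\<omega>. exp_mart b 0 \<omega> + (\<Sum>k<2^n. step k \<omega>))"
    by (rule Bochner_Integration.integrable_cong) (simp_all add: telescope)
  then show "integrable M (\<lambda>\<omega>. exp_mart b (dyadic_ceiling n (\<sigma> \<omega>)) \<omega>)"
    using exp_mart_mean_one(1)[of 0] step(1) by auto
  have "(\<integral>\<omega>. exp_mart b (dyadic_ceiling n (\<sigma> \<omega>)) \<omega> \<partial>M)
      = (\<integral>\<omega>. exp_mart b 0 \<omega> + (\<Sum>k<2^n. step k \<omega>) \<partial>M)"
    by (rule Bochner_Integration.integral_cong) (simp_all add: telescope)
  also have "\<dots> = 1"
    using exp_mart_mean_one[of 0] step by (simp add: integrable_sum)
  finally show "(\<integral>\<omega>. exp_mart b (dyadic_ceiling n (\<sigma> \<omega>)) \<omega> \<partial>M) = 1" .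
qed

lemma borel_measurable_W_dyadic_stopped:
  assumes "\<sigma> \<in> borel_measurable M"
  shows "(\<lambda>\<omega>. W (dyadic_ceiling n (\<sigma> \<omega>)) \<omega>) \<in> borel_measurable M"
proof -
  have "(\<lambda>\<omega>. nat \<lceil>2^n * \<sigma> \<omega>\<rceil>) \<in> measurable M (count_space UNIV)"
    using assms by measurable
  then have "(\<lambda>\<omega>. (\<lambda>k \<omega>. W (real k / 2^n) \<omega>) (nat \<lceil>2^n * \<sigma> \<omega>\<rceil>) \<omega>) \<in> borel_measurable M"
    by (rule measurable_compose_countable[rotated]) simp
  then show ?thesis by (simp add: dyadic_ceiling_def)
qed

lemma AE_W_dyadic_stopped_tendsto:
  assumes "\<forall>\<omega>\<in>space M. \<sigma> \<omega> \<in> {0..1}"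
  shows "AE \<omega> in M. (\<lambda>n. W (dyadic_ceiling n (\<sigma> \<omega>)) \<omega>) \<longlonglongrightarrow> W (\<sigma> \<omega>) \<omega>"
  using AE_continuous_W
proof (rule AE_mp, intro AE_I2 impI)
  fix \<omega> assume "\<omega> \<in> space M" and cont: "continuous_on {0..} (\<lambda>t. W t \<omega>)"
  then have \<sigma>: "0 \<le> \<sigma> \<omega>" "\<sigma> \<omega> \<le> 1" using assms by auto
  show "(\<lambda>n. W (dyadic_ceiling n (\<sigma> \<omega>)) \<omega>) \<longlonglongrightarrow> W (\<sigma> \<omega>) \<omega>"
    by (rule continuous_on_tendsto_compose[OF cont tendsto_dyadic_ceiling[OF \<sigma>]])
       (use \<sigma> dyadic_ceiling_bounds[OF \<sigma>] in auto)
qed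

(* The paths are continuous only almost surely, so W (\<sigma> \<omega>) \<omega> is merely an a.e. limit of
   measurable maps; this is where completeness of M is needed. *)
lemma borel_measurable_W_stopped:
  assumes "\<sigma> \<in> stopping_times01 M W"
  shows "(\<lambda>\<omega>. W (\<sigma> \<omega>) \<omega>) \<in> borel_measurable M"
proof (rule borel_measurable_AE_eq)
  have "\<sigma> \<in> borel_measurable M" using assms by (rule borel_measurable_stopping_time01)
  then show "(\<lambda>\<omega>. lim (\<lambda>n. W (dyadic_ceiling n (\<sigma> \<omega>)) \<omega>)) \<in> borel_measurable M"
    using borel_measurable_W_dyadic_stopped by measurable
  have "\<forall>\<omega>\<in>space M. \<sigma> \<omega> \<in> {0..1}" using assms by (simp add: stopping_times01_def)
  from AE_W_dyadic_stopped_tendsto[OF this]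
  show "AE \<omega> in M. W (\<sigma> \<omega>) \<omega> = lim (\<lambda>n. W (dyadic_ceiling n (\<sigma> \<omega>)) \<omega>)"
    by eventually_elim (simp add: limI)
qed

lemma borel_measurable_exp_mart_stopped:
  assumes "\<sigma> \<in> stopping_times01 M W"
  shows "(\<lambda>\<omega>. exp_mart b (\<sigma> \<omega>) \<omega>) \<in> borel_measurable M"
  using borel_measurable_stopping_time01[OF assms] borel_measurable_W_stopped[OF assms]
  unfolding exp_mart_def by measurable

lemma integral_min_exp_mart_dyadic_stopped_bounds:
  assumes \<sigma>: "\<sigma> \<in> stopping_times01 M W" and "0 < K"
  shows "1 - exp (b\<^sup>2) / K \<le> (\<integral>\<omega>. min (exp_mart b (dyadic_ceiling n (\<sigma> \<omega>)) \<omega>) K \<partial>M)"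
    and "(\<integral>\<omega>. min (exp_mart b (dyadic_ceiling n (\<sigma> \<omega>)) \<omega>) K \<partial>M) \<le> 1"
proof -
  let ?Y = "\<lambda>b \<omega>. exp_mart b (dyadic_ceiling n (\<sigma> \<omega>)) \<omega>"
  note mean_one = exp_mart_dyadic_stopped_mean_one[OF \<sigma>]
  have "?Y b \<in> borel_measurable M" using mean_one(1) by (rule borel_measurable_integrable)
  then have int_min: "integrable M (\<lambda>\<omega>. min (?Y b \<omega>) K)"
    using \<open>0 < K\<close> exp_mart_pos[of b]
    by (intro Bochner_Integration.integrable_bound[OF mean_one(1)[of b n]]) (auto intro!: AE_I2)
  \<comment> \<open>the truncation error is bounded by the second moment, a stopped exponential martingale
    up to the factor \<open>exp (b\<^sup>2 * t) \<le> exp (b\<^sup>2)\<close>\<close>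
  have "?Y b \<omega> - exp (b\<^sup>2) / K * ?Y (2 * b) \<omega> \<le> min (?Y b \<omega>) K" if "\<omega> \<in> space M" for \<omega>
  proof -
    have "0 \<le> \<sigma> \<omega>" "\<sigma> \<omega> \<le> 1" using \<sigma> that by (auto simp: stopping_times01_def)
    then have "exp (b\<^sup>2 * dyadic_ceiling n (\<sigma> \<omega>)) \<le> exp (b\<^sup>2)"
      using dyadic_ceiling_bounds(4) by (simp add: mult_left_le)
    then have "(?Y b \<omega>)\<^sup>2 \<le> exp (b\<^sup>2) * ?Y (2 * b) \<omega>"
      unfolding exp_mart_square using exp_mart_pos less_imp_le by (blast intro: mult_right_mono)
    then have "(?Y b \<omega>)\<^sup>2 / K \<le> exp (b\<^sup>2) / K * ?Y (2 * b) \<omega>"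
      using \<open>0 < K\<close> by (simp add: divide_right_mono)
    with min_le_square_div[of "?Y b \<omega>" K] exp_mart_pos \<open>0 < K\<close> show ?thesis
      by (smt (verit))
  qed
  then have "(\<integral>\<omega>. ?Y b \<omega> - exp (b\<^sup>2) / K * ?Y (2 * b) \<omega> \<partial>M) \<le> (\<integral>\<omega>. min (?Y b \<omega>) K \<partial>M)"
    using mean_one int_min by (intro integral_mono) auto
  then show "1 - exp (b\<^sup>2) / K \<le> (\<integral>\<omega>. min (?Y b \<omega>) K \<partial>M)"
    using mean_one by simp
  have "(\<integral>\<omega>. min (?Y b \<omega>) K \<partial>M) \<le> (\<integral>\<omega>. ?Y b \<omega> \<partial>M)"
    using mean_one int_min by (intro integral_mono) auto
  then show "(\<integral>\<omega>. min (?Y b \<omega>) K \<partial>M) \<le> 1"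
    using mean_one by simp
qed

lemma integral_min_exp_mart_stopped_bounds:
  assumes \<sigma>: "\<sigma> \<in> stopping_times01 M W" and "0 < K"
  shows "1 - exp (b\<^sup>2) / K \<le> (\<integral>\<omega>. min (exp_mart b (\<sigma> \<omega>) \<omega>) K \<partial>M)"
    and "(\<integral>\<omega>. min (exp_mart b (\<sigma> \<omega>) \<omega>) K \<partial>M) \<le> 1"
proof -
  have lim: "(\<lambda>n. \<integral>\<omega>. min (exp_mart b (dyadic_ceiling n (\<sigma> \<omega>)) \<omega>) K \<partial>M)
      \<longlonglongrightarrow> (\<integral>\<omega>. min (exp_mart b (\<sigma> \<omega>) \<omega>) K \<partial>M)"
  proof (rule integral_dominated_convergence[where w="\<lambda>_. K"])
    have "\<sigma> \<in> borel_measurable M" using \<sigma> by (rule borel_measurable_stopping_time01)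
    then show "(\<lambda>\<omega>. min (exp_mart b (dyadic_ceiling n (\<sigma> \<omega>)) \<omega>) K) \<in> borel_measurable M" for n
      using borel_measurable_W_dyadic_stopped unfolding exp_mart_def dyadic_ceiling_def by measurable
    show "(\<lambda>\<omega>. min (exp_mart b (\<sigma> \<omega>) \<omega>) K) \<in> borel_measurable M"
      using borel_measurable_exp_mart_stopped[OF \<sigma>] by measurable
    have "\<forall>\<omega>\<in>space M. \<sigma> \<omega> \<in> {0..1}" using \<sigma> by (simp add: stopping_times01_def)
    from AE_W_dyadic_stopped_tendsto[OF this]
    show "AE \<omega> in M. (\<lambda>n. min (exp_mart b (dyadic_ceiling n (\<sigma> \<omega>)) \<omega>) K) \<longlonglongrightarrow> min (exp_mart b (\<sigma> \<omega>) \<omega>) K"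
    proof (rule AE_mp, intro AE_I2 impI)
      fix \<omega> assume "\<omega> \<in> space M" and "(\<lambda>n. W (dyadic_ceiling n (\<sigma> \<omega>)) \<omega>) \<longlonglongrightarrow> W (\<sigma> \<omega>) \<omega>"
      moreover have "(\<lambda>n. dyadic_ceiling n (\<sigma> \<omega>)) \<longlonglongrightarrow> \<sigma> \<omega>"
        using \<sigma> \<open>\<omega> \<in> space M\<close> by (intro tendsto_dyadic_ceiling) (auto simp: stopping_times01_def)
      ultimately show "(\<lambda>n. min (exp_mart b (dyadic_ceiling n (\<sigma> \<omega>)) \<omega>) K) \<longlonglongrightarrow> min (exp_mart b (\<sigma> \<omega>) \<omega>) K"
        unfolding exp_mart_def by (intro tendsto_intros)
    qed
    show "AE \<omega> in M. norm (min (exp_mart b (dyadic_ceiling n (\<sigma> \<omega>)) \<omega>) K) \<le> K" for n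
      using exp_mart_pos \<open>0 < K\<close> by (auto intro!: AE_I2 simp: less_imp_le)
  qed simp
  show "1 - exp (b\<^sup>2) / K \<le> (\<integral>\<omega>. min (exp_mart b (\<sigma> \<omega>) \<omega>) K \<partial>M)"
    using LIMSEQ_le_const[OF lim] integral_min_exp_mart_dyadic_stopped_bounds(1)[OF assms] by blast
  show "(\<integral>\<omega>. min (exp_mart b (\<sigma> \<omega>) \<omega>) K \<partial>M) \<le> 1"
    using LIMSEQ_le_const2[OF lim] integral_min_exp_mart_dyadic_stopped_bounds(2)[OF assms] by blast
qed

lemma exp_mart_stopped:
  assumes \<sigma>: "\<sigma> \<in> stopping_times01 M W"
  shows "integrable M (\<lambda>\<omega>. exp_mart b (\<sigma> \<omega>) \<omega>)" and "1 \<le> (\<integral>\<omega>. exp_mart b (\<sigma> \<omega>) \<omega> \<partial>M)"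
proof -
  note truncations = integrable_of_bounded_truncations[OF borel_measurable_exp_mart_stopped[OF \<sigma>]
      less_imp_le[OF exp_mart_pos] integral_min_exp_mart_stopped_bounds(2)[OF \<sigma>]]
  show "integrable M (\<lambda>\<omega>. exp_mart b (\<sigma> \<omega>) \<omega>)" by (rule truncations(1))
  have "(\<lambda>k. 1 - exp (b\<^sup>2) / real (Suc k)) \<longlonglongrightarrow> 1 - 0"
    by (intro tendsto_intros LIMSEQ_Suc[OF lim_const_over_n])
  then have lower: "(\<lambda>k. 1 - exp (b\<^sup>2) / real (Suc k)) \<longlonglongrightarrow> 1" by simp
  show "1 \<le> (\<integral>\<omega>. exp_mart b (\<sigma> \<omega>) \<omega> \<partial>M)"
  proof (rule LIMSEQ_le[OF lower truncations(2)[of b]])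
    have "1 - exp (b\<^sup>2) / real (Suc k) \<le> (\<integral>\<omega>. min (exp_mart b (\<sigma> \<omega>) \<omega>) (real (Suc k)) \<partial>M)" for k
      by (rule integral_min_exp_mart_stopped_bounds(1)[OF \<sigma>]) simp
    then show "\<exists>N. \<forall>k\<ge>N. 1 - exp (b\<^sup>2) / real (Suc k) \<le> (\<integral>\<omega>. min (exp_mart b (\<sigma> \<omega>) \<omega>) (real (Suc k)) \<partial>M)"
      by blast
  qed
qed

section \<open>The payoff and its infimum over stopping times\<close>

definition payoff :: "real \<Rightarrow> ('a \<Rightarrow> real) \<Rightarrow> real \<Rightarrow> real" where
  "payoff b \<sigma> l = (\<integral>\<omega>. (1 + sin (pi * \<sigma> \<omega>)) * max (exp_mart b (\<sigma> \<omega>) \<omega>) (1/2)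
      * min 1 (l * exp_mart b (\<sigma> \<omega>) \<omega>) \<partial>M)"

lemma sin_pi_stopped_bounds:
  assumes "\<sigma> \<in> stopping_times01 M W" "\<omega> \<in> space M"
  shows "0 \<le> sin (pi * \<sigma> \<omega>)" "sin (pi * \<sigma> \<omega>) \<le> 1"
  using assms sin_pi_unit_bounds[of "\<sigma> \<omega>"] by (auto simp: stopping_times01_def)

lemma integrable_payoff:
  assumes \<sigma>: "\<sigma> \<in> stopping_times01 M W" and "0 < l"
  shows "integrable M (\<lambda>\<omega>. (1 + sin (pi * \<sigma> \<omega>)) * max (exp_mart b (\<sigma> \<omega>) \<omega>) (1/2)
      * min 1 (l * exp_mart b (\<sigma> \<omega>) \<omega>))"
proof (rule Bochner_Integration.integrable_bound)
  show "integrable M (\<lambda>\<omega>. 2 * exp_mart b (\<sigma> \<omega>) \<omega> + 2)"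
    using exp_mart_stopped(1)[OF \<sigma>] by simp
  show "(\<lambda>\<omega>. (1 + sin (pi * \<sigma> \<omega>)) * max (exp_mart b (\<sigma> \<omega>) \<omega>) (1/2) * min 1 (l * exp_mart b (\<sigma> \<omega>) \<omega>))
      \<in> borel_measurable M"
    using borel_measurable_stopping_time01[OF \<sigma>] borel_measurable_exp_mart_stopped[OF \<sigma>] by measurable
  show "AE \<omega> in M. norm ((1 + sin (pi * \<sigma> \<omega>)) * max (exp_mart b (\<sigma> \<omega>) \<omega>) (1/2)
      * min 1 (l * exp_mart b (\<sigma> \<omega>) \<omega>)) \<le> norm (2 * exp_mart b (\<sigma> \<omega>) \<omega> + 2)"
    using payoff_integrand_bounds[OF sin_pi_stopped_bounds[OF \<sigma>] less_imp_le[OF exp_mart_pos] \<open>0 < l\<close>]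
      exp_mart_pos[of b]
    by (intro AE_I2) (simp add: less_imp_le)
qed

lemma payoff_ge_one:
  assumes \<sigma>: "\<sigma> \<in> stopping_times01 M W" and "2 \<le> l"
  shows "1 \<le> payoff b \<sigma> l"
proof -
  have "1 \<le> (\<integral>\<omega>. exp_mart b (\<sigma> \<omega>) \<omega> \<partial>M)" by (rule exp_mart_stopped(2)[OF \<sigma>])
  also have "\<dots> \<le> payoff b \<sigma> l"
    unfolding payoff_def
    using exp_mart_stopped(1)[OF \<sigma>] integrable_payoff[OF \<sigma>] \<open>2 \<le> l\<close>
      payoff_integrand_ge[OF sin_pi_stopped_bounds(1)[OF \<sigma>] exp_mart_pos \<open>2 \<le> l\<close>]
    by (intro integral_mono) auto
  finally show ?thesis .
qed

lemma payoff_start: "2 \<le> l \<Longrightarrow> payoff b (\<lambda>_. 0) l = 1"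
proof -
  assume "2 \<le> l"
  have "AE \<omega> in M. max (exp_mart b 0 \<omega>) (1/2) * min 1 (l * exp_mart b 0 \<omega>) = 1"
    using AE_W_0 by eventually_elim (use \<open>2 \<le> l\<close> in \<open>simp add: exp_mart_def\<close>)
  then have "payoff b (\<lambda>_. 0) l = (\<integral>\<omega>. 1 \<partial>M)"
    unfolding payoff_def by (intro integral_cong_AE) simp_all
  then show ?thesis by (simp add: prob_space)
qed

lemma concave_on_payoff:
  assumes \<sigma>: "\<sigma> \<in> stopping_times01 M W"
  shows "concave_on {0<..} (payoff b \<sigma>)"
  unfolding concave_on_iff
proof (intro conjI ballI allI impI convex_real_interval)
  fix x y u v :: real assume xy: "x \<in> {0<..}" "y \<in> {0<..}" and uv: "0 \<le> u" "0 \<le> v" "u + v = 1"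
  then have "0 < u *\<^sub>R x + v *\<^sub>R y"
    by (cases "u = 0") (auto intro: add_pos_nonneg)
  let ?c = "\<lambda>\<omega>. (1 + sin (pi * \<sigma> \<omega>)) * max (exp_mart b (\<sigma> \<omega>) \<omega>) (1/2)"
  have "u * payoff b \<sigma> x + v * payoff b \<sigma> y
      = (\<integral>\<omega>. u * (?c \<omega> * min 1 (x * exp_mart b (\<sigma> \<omega>) \<omega>)) + v * (?c \<omega> * min 1 (y * exp_mart b (\<sigma> \<omega>) \<omega>)) \<partial>M)"
    using integrable_payoff[OF \<sigma>] xy by (simp add: payoff_def)
  also have "\<dots> \<le> payoff b \<sigma> (u *\<^sub>R x + v *\<^sub>R y)"
    unfolding payoff_def
  proof (intro integral_mono)
    fix \<omega> assume "\<omega> \<in> space M"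
    then have "0 \<le> ?c \<omega>" using sin_pi_stopped_bounds[OF \<sigma>] by simp
    moreover have "u * min 1 (x * exp_mart b (\<sigma> \<omega>) \<omega>) + v * min 1 (y * exp_mart b (\<sigma> \<omega>) \<omega>)
        \<le> min 1 ((u *\<^sub>R x + v *\<^sub>R y) * exp_mart b (\<sigma> \<omega>) \<omega>)"
      using concave_on_min_one_mult[OF less_imp_le[OF exp_mart_pos] convex_UNIV] uv
      by (simp add: concave_on_iff)
    ultimately show "u * (?c \<omega> * min 1 (x * exp_mart b (\<sigma> \<omega>) \<omega>)) + v * (?c \<omega> * min 1 (y * exp_mart b (\<sigma> \<omega>) \<omega>))
        \<le> ?c \<omega> * min 1 ((u *\<^sub>R x + v *\<^sub>R y) * exp_mart b (\<sigma> \<omega>) \<omega>)"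
      by (smt (verit) mult_left_mono distrib_left mult.left_commute)
  qed (use integrable_payoff[OF \<sigma>] xy \<open>0 < u *\<^sub>R x + v *\<^sub>R y\<close> in auto)
  finally show "u * payoff b \<sigma> x + v * payoff b \<sigma> y \<le> payoff b \<sigma> (u *\<^sub>R x + v *\<^sub>R y)" .
qed

lemma payoff_end_le:
  assumes "0 < x" "x \<le> 2"
  shows "payoff b (\<lambda>_. 1) x
    \<le> 1 - (2 - x) * (1/2 * (\<integral>\<omega>. exp_mart b 1 \<omega> * indicator {\<omega>. exp_mart b 1 \<omega> < 1/2} \<omega> \<partial>M))"
proof -
  let ?I = "\<lambda>\<omega>. exp_mart b 1 \<omega> * indicator {\<omega>. exp_mart b 1 \<omega> < 1/2} \<omega>"
  have "?I = (\<lambda>\<omega>. exp_mart b 1 \<omega> * of_bool (exp_mart b 1 \<omega> < 1/2))"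
    by (simp add: indicator_def)
  also have "\<dots> \<in> borel_measurable M" by measurable
  finally have "integrable M ?I"
  proof (rule Bochner_Integration.integrable_bound[OF exp_mart_mean_one(1)[of 1 b], rotated])
    show "AE \<omega> in M. norm (?I \<omega>) \<le> norm (exp_mart b 1 \<omega>)"
      by (intro AE_I2) (simp add: indicator_def)
  qed simp
  then have mean: "(\<integral>\<omega>. exp_mart b 1 \<omega> - (2 - x) / 2 * ?I \<omega> \<partial>M) = 1 - (2 - x) * (1/2 * integral\<^sup>L M ?I)"
    and int_bound: "integrable M (\<lambda>\<omega>. exp_mart b 1 \<omega> - (2 - x) / 2 * ?I \<omega>)"
    using exp_mart_mean_one[of 1 b] by simp_all
  have "(1 + sin (pi * 1)) * max (exp_mart b 1 \<omega>) (1/2) * min 1 (x * exp_mart b 1 \<omega>)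
      \<le> exp_mart b 1 \<omega> - (2 - x) / 2 * ?I \<omega>" for \<omega>
  proof -
    have "indicator {..<1/2} (exp_mart b 1 \<omega>) = (indicator {\<omega>. exp_mart b 1 \<omega> < 1/2} \<omega> :: real)"
      by (simp add: indicator_def)
    then show ?thesis using payoff_integrand_at_one_le[OF assms exp_mart_pos[of b 1 \<omega>]] by simp
  qed
  then have "payoff b (\<lambda>_. 1) x \<le> (\<integral>\<omega>. exp_mart b 1 \<omega> - (2 - x) / 2 * ?I \<omega> \<partial>M)"
    unfolding payoff_def
    using integrable_payoff[OF stopping_times01_const[of 1] \<open>0 < x\<close>, of b] int_bound
    by (intro integral_mono) simp_all
  then show ?thesis unfolding mean .
qed

definition optimal_payoff :: "real \<Rightarrow> real \<Rightarrow> real" where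
  "optimal_payoff b l = (INF \<sigma>\<in>stopping_times01 M W. payoff b \<sigma> l)"

lemma payoff_nonneg:
  assumes \<sigma>: "\<sigma> \<in> stopping_times01 M W" and "0 < l"
  shows "0 \<le> payoff b \<sigma> l"
  unfolding payoff_def
proof (intro integral_nonneg_AE AE_I2)
  fix \<omega> assume "\<omega> \<in> space M"
  show "0 \<le> (1 + sin (pi * \<sigma> \<omega>)) * max (exp_mart b (\<sigma> \<omega>) \<omega>) (1/2) * min 1 (l * exp_mart b (\<sigma> \<omega>) \<omega>)"
    using payoff_integrand_bounds(1)[OF sin_pi_stopped_bounds[OF \<sigma> \<open>\<omega> \<in> space M\<close>]
        less_imp_le[OF exp_mart_pos] \<open>0 < l\<close>] .
qed

lemma bdd_below_payoff: "0 < l \<Longrightarrow> bdd_below ((\<lambda>\<sigma>. payoff b \<sigma> l) ` stopping_times01 M W)"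
  using payoff_nonneg by (intro bdd_belowI2[where m=0]) blast

lemma optimal_payoff_eq_one:
  assumes "2 \<le> l"
  shows "optimal_payoff b l = 1"
  unfolding optimal_payoff_def
proof (rule cInf_eq_minimum)
  show "1 \<in> (\<lambda>\<sigma>. payoff b \<sigma> l) ` stopping_times01 M W"
    using payoff_start[OF assms] stopping_times01_const[of 0] by (metis image_eqI order_refl zero_le_one)
  show "1 \<le> x" if "x \<in> (\<lambda>\<sigma>. payoff b \<sigma> l) ` stopping_times01 M W" for x
    using that payoff_ge_one assms by blast
qed

lemma concave_on_optimal_payoff: "concave_on {0<..} (optimal_payoff b)"
  unfolding optimal_payoff_def[abs_def]
proof (rule concave_on_INF)
  have "(\<lambda>_. 0) \<in> stopping_times01 M W" by (rule stopping_times01_const) simp_all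
  then show "stopping_times01 M W \<noteq> {}" by blast
  show "concave_on {0<..} (payoff b \<sigma>)" if "\<sigma> \<in> stopping_times01 M W" for \<sigma>
    using that by (rule concave_on_payoff)
  show "bdd_below ((\<lambda>\<sigma>. payoff b \<sigma> l) ` stopping_times01 M W)" if "l \<in> {0<..}" for l
    using that by (intro bdd_below_payoff) simp
qed

lemma optimal_payoff_le_end:
  assumes "0 < x" "x \<le> 2"
  shows "optimal_payoff b x
    \<le> 1 - (2 - x) * (1/2 * (\<integral>\<omega>. exp_mart b 1 \<omega> * indicator {\<omega>. exp_mart b 1 \<omega> < 1/2} \<omega> \<partial>M))"
proof -
  have "optimal_payoff b x \<le> payoff b (\<lambda>_. 1) x"
    unfolding optimal_payoff_def
    using bdd_below_payoff[OF \<open>0 < x\<close>] stopping_times01_const[of 1] by (intro cINF_lower) simp_all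
  also have "\<dots> \<le> 1 - (2 - x) * (1/2 * (\<integral>\<omega>. exp_mart b 1 \<omega> * indicator {\<omega>. exp_mart b 1 \<omega> < 1/2} \<omega> \<partial>M))"
    using assms by (rule payoff_end_le)
  finally show ?thesis .
qed

end

theorem mainTheorem6:
  fixes M :: "'a measure" and W :: "real \<Rightarrow> 'a \<Rightarrow> real"
    and \<kappa> \<theta> :: real
    and Z X :: "real \<Rightarrow> 'a \<Rightarrow> real" and F :: "real \<Rightarrow> real" and \<nu> :: real
  assumes BM: "brownian_motion M W"
    and complete: "complete_measure M"
    and kappa: "\<kappa> > 0"
    and Z_def: "\<And>t \<omega>. Z t \<omega> = exp (- (\<theta> / \<kappa>) * W t \<omega> - \<theta>\<^sup>2 / (2 * \<kappa>\<^sup>2) * t)"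
    and X_def: "\<And>t \<omega>. X t \<omega> = (1 + sin (pi * t)) * max (Z t \<omega>) (1/2)"
    and F_def: "\<And>l. l > 0 \<Longrightarrow>
        F l = (INF \<sigma>\<in>stopping_times01 M W.
                  integral\<^sup>L M (\<lambda>\<omega>. X (\<sigma> \<omega>) \<omega> * min 1 (l * Z (\<sigma> \<omega>) \<omega>)))"
    and nu_def: "\<nu> = 1/2 * integral\<^sup>L M (\<lambda>\<omega>. Z 1 \<omega> * indicator {\<omega>. Z 1 \<omega> < 1/2} \<omega>)"
  shows "(\<forall>l\<ge>2. F l = 1) \<and>
         (\<exists>d. ((\<lambda>x. (F x - F 2) / (x - 2)) \<longlongrightarrow> d) (at_left 2) \<and> d \<ge> \<nu>)"
proof -
  interpret complete_brownian_motion M W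
    by (rule complete_brownian_motion.intro[OF BM complete])
  define b where "b = - (\<theta> / \<kappa>)"
  have Z_eq: "Z = exp_mart b"
    using kappa by (intro ext) (simp add: Z_def exp_mart_def b_def power_divide)
  have F_eq: "F l = optimal_payoff b l" if "0 < l" for l
    unfolding F_def[OF that] optimal_payoff_def payoff_def X_def Z_eq ..
  have F_ge_2: "\<forall>l\<ge>2. F l = 1"
    using F_eq optimal_payoff_eq_one by simp
  have "concave_on {1..2} (optimal_payoff b)"
    using concave_on_optimal_payoff unfolding concave_on_def by (rule convex_on_subset) auto
  then have "concave_on {1..2} F"
    using F_eq concave_on_cong[of "{1..2}" F "optimal_payoff b"] by simp
  moreover have "\<nu> \<le> (F x - F 2) / (x - 2)" if "1 < x" "x < 2" for x
  proof -
    have "F x \<le> 1 - (2 - x) * \<nu>"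
      using optimal_payoff_le_end[of x b] F_eq that by (simp add: nu_def Z_eq)
    then show ?thesis using that F_ge_2 by (simp add: le_divide_eq algebra_simps)
  qed
  ultimately show ?thesis
    using F_ge_2 concave_on_left_slope_tendsto[of 1 2 F \<nu>] by simp
qed

end
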